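(* Let $A$ be a $d$-dimensional polystochastic matrix of order $n$ and $1\le k\le d-1$. Then $\operatorname{per}A>0$ if and only if there exist $n$ pairwise diagonally located parallel $k$-dimensional planes $\Gamma_1,\dots,\Gamma_n$ of $A$ such that the $(k+1)$-dimensional matrix $(\Gamma_1,\dots,\Gamma_n)$ has positive permanent. Equivalently, $\operatorname{per}A=0$ if and only if $\operatorname{per}(\Gamma_1,\dots,\Gamma_n)=0$ for all families of $n$ pairwise diagonally located parallel $k$-dimensional planes $\Gamma_1,\dots,\Gamma_n$ of $A$.
   Context: A $d$-dimensional matrix of order $n$ is an array $A=(a_\alpha)_{\alpha\in I_n^d}$, $I_n^d=\{0,\dots,n-1\}^d$. A $k$-dimensional plane of direction $(i_1,\dots,i_{d-k})$ is obtained by fixing coordinates $i_1,\dots,i_{d-k}$ to values $(\beta_1,\dots,\beta_{d-k})$ and letting the other $k$ coordinates vary; it is a $k$-dimensional matrix of order $n$. Two planes are parallel if they have the same direction, and parallel planes with fixed values $(\beta_j)$ and $(\gamma_j)$ are diagonally located if $\beta_j\ne\gamma_j$ for all $j$. For parallel $k$-dimensional planes $\Gamma_1,\dots,\Gamma_n$, $(\Gamma_1,\dots,\Gamma_n)$ denotes the $(k+1)$-dimensional matrix of order $n$ whose hyperplanes of the first direction are $\Gamma_1,\dots,\Gamma_n$ in this order. $A$ is polystochastic if it is nonnegative and each line (1-dimensional plane) sums to $1$. A diagonal is a set of $n$ indices any two of which differ in every coordinate; $\operatorname{per}A=\sum_p\prod_{\alpha\in p}a_\alpha$ over all diagonals $p$.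 *)

theory Defs
  imports Complex_Main
begin

text \<open>A d-dimensional matrix of order n is a function on index lists; only its values
  on the index set I_n^d (lists of length d with entries < n) matter.\<close>

definition index_set :: "nat \<Rightarrow> nat \<Rightarrow> nat list set" where
  "index_set n d = {xs. length xs = d \<and> (\<forall>x\<in>set xs. x < n)}"

definition polystochastic :: "nat \<Rightarrow> nat \<Rightarrow> (nat list \<Rightarrow> real) \<Rightarrow> bool" where
  "polystochastic n d A \<longleftrightarrow>
     (\<forall>\<alpha>\<in>index_set n d. 0 \<le> A \<alpha>) \<and>
     (\<forall>\<alpha>\<in>index_set n d. \<forall>i<d. (\<Sum>t<n. A (\<alpha>[i := t])) = 1)"

definition diagonals :: "nat \<Rightarrow> nat \<Rightarrow> nat list set set" where
  "diagonals n d = {p. p \<subseteq> index_set n d \<and> card p = n \<and>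
      (\<forall>a\<in>p. \<forall>b\<in>p. a \<noteq> b \<longrightarrow> (\<forall>i<d. a ! i \<noteq> b ! i))}"

definition per :: "nat \<Rightarrow> nat \<Rightarrow> (nat list \<Rightarrow> real) \<Rightarrow> real" where
  "per n d A = (\<Sum>p\<in>diagonals n d. \<Prod>\<alpha>\<in>p. A \<alpha>)"

text \<open>The plane of A with fixed coordinate set S (the direction) and fixed values
  \<beta> i (i \<in> S), viewed as a (d - card S)-dimensional matrix: its free coordinates
  are the coordinates in {..<d} - S taken in increasing order.\<close>
definition plane :: "nat \<Rightarrow> (nat list \<Rightarrow> real) \<Rightarrow> nat set \<Rightarrow> (nat \<Rightarrow> nat) \<Rightarrow> nat list \<Rightarrow> real" where
  "plane d A S \<beta> \<gamma> = A (map (\<lambda>i. if i \<in> S then \<beta> i else \<gamma> ! card ({..<i} - S)) [0..<d])"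

text \<open>(\<Gamma>_1,...,\<Gamma>_n): the matrix whose first-direction hyperplanes are the planes
  \<Gamma>_{t+1} = plane d A S (\<beta> t), t = 0..n-1.\<close>
definition stack_planes :: "nat \<Rightarrow> (nat list \<Rightarrow> real) \<Rightarrow> nat set \<Rightarrow> (nat \<Rightarrow> nat \<Rightarrow> nat) \<Rightarrow> nat list \<Rightarrow> real" where
  "stack_planes d A S \<beta> xs = plane d A S (\<beta> (hd xs)) (tl xs)"

text \<open>A family of n pairwise diagonally located parallel k-dimensional planes, all with
  direction S (a set of d - k fixed coordinates) and fixed values \<beta> t, t < n.\<close>
definition diag_plane_family :: "nat \<Rightarrow> nat \<Rightarrow> nat \<Rightarrow> nat set \<Rightarrow> (nat \<Rightarrow> nat \<Rightarrow> nat) \<Rightarrow> bool" where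
  "diag_plane_family n d k S \<beta> \<longleftrightarrow>
     S \<subseteq> {..<d} \<and> card S = d - k \<and>
     (\<forall>t<n. \<forall>i\<in>S. \<beta> t i < n) \<and>
     (\<forall>t<n. \<forall>u<n. t \<noteq> u \<longrightarrow> (\<forall>i\<in>S. \<beta> t i \<noteq> \<beta> u i))"

end

theory Submission
  imports Defs
begin

text \<open>For a nonnegative matrix, \<open>per A > 0\<close> iff some diagonal has only positive entries.
  The entry of the stack of planes at \<open>(t, y)\<close> is the entry of A at the point of the t-th
  plane with free coordinates y; since the planes are pairwise diagonally located, this map
  sends diagonals of the stack to diagonals of A. Conversely, given a positive diagonal p of A,
  let the t-th plane fix the first d - k coordinates to those of the point of p whose first
  coordinate is t; then \<open>\<alpha> \<mapsto> (\<alpha>!0, \<alpha>!(d-k), \<dots>, \<alpha>!(d-1))\<close> maps p onto a positive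
  diagonal of the stack. Polystochasticity is used only through nonnegativity.\<close>

lemma finite_index_set: "finite (index_set n d)"
proof -
  have "index_set n d = {xs. set xs \<subseteq> {..<n} \<and> length xs = d}"
    unfolding index_set_def by auto
  thus ?thesis using finite_lists_length_eq[of "{..<n}" d] by simp
qed

lemma finite_diagonals: "finite (diagonals n d)"
proof (rule finite_subset)
  show "diagonals n d \<subseteq> Pow (index_set n d)" unfolding diagonals_def by auto
qed (simp add: finite_index_set)

lemma finite_diagonal: "p \<in> diagonals n d \<Longrightarrow> finite p"
  using finite_index_set unfolding diagonals_def by (auto intro: finite_subset)

lemma per_nonneg:
  assumes "\<forall>\<alpha>\<in>index_set n d. 0 \<le> A \<alpha>"
  shows "0 \<le> per n d A"
  using assms unfolding per_def diagonals_def by (auto intro!: sum_nonneg prod_nonneg)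

lemma per_pos_iff_positive_diagonal:
  assumes nonneg: "\<forall>\<alpha>\<in>index_set n d. 0 \<le> A \<alpha>"
  shows "0 < per n d A \<longleftrightarrow> (\<exists>p\<in>diagonals n d. \<forall>\<alpha>\<in>p. 0 < A \<alpha>)"
proof -
  have nonneg_on: "\<forall>\<alpha>\<in>p. 0 \<le> A \<alpha>" if "p \<in> diagonals n d" for p
    using that nonneg unfolding diagonals_def by auto
  show ?thesis
  proof
    assume "0 < per n d A"
    then obtain p where p: "p \<in> diagonals n d" and "(\<Prod>\<alpha>\<in>p. A \<alpha>) \<noteq> 0"
      unfolding per_def by (metis less_irrefl sum.neutral)
    hence "\<forall>\<alpha>\<in>p. A \<alpha> \<noteq> 0" using finite_diagonal by (simp add: prod_zero_iff)
    with nonneg_on[OF p] p show "\<exists>p\<in>diagonals n d. \<forall>\<alpha>\<in>p. 0 < A \<alpha>"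
      by (metis less_le)
  next
    assume "\<exists>p\<in>diagonals n d. \<forall>\<alpha>\<in>p. 0 < A \<alpha>"
    then obtain p where p: "p \<in> diagonals n d" and pos: "\<forall>\<alpha>\<in>p. 0 < A \<alpha>" by blast
    have "0 < (\<Prod>\<alpha>\<in>p. A \<alpha>)" using pos by (simp add: prod_pos)
    also have "\<dots> \<le> per n d A" unfolding per_def
      using p finite_diagonals nonneg_on by (intro member_le_sum) (auto intro: prod_nonneg)
    finally show "0 < per n d A" .
  qed
qed

definition stack_index :: "nat \<Rightarrow> nat set \<Rightarrow> (nat \<Rightarrow> nat \<Rightarrow> nat) \<Rightarrow> nat list \<Rightarrow> nat list" where
  "stack_index d S \<beta> x =
     map (\<lambda>i. if i \<in> S then \<beta> (hd x) i else tl x ! card ({..<i} - S)) [0..<d]"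

lemma stack_planes_eq: "stack_planes d A S \<beta> x = A (stack_index d S \<beta> x)"
  unfolding stack_planes_def plane_def stack_index_def by simp

lemma card_free_coords_less:
  assumes "S \<subseteq> {..<d}" "card S = d - k" "k \<le> d" "i < d" "i \<notin> S"
  shows "card ({..<i} - S) < k"
proof -
  have "card ({..<i} - S) < card ({..<d} - S)"
    using assms by (intro psubset_card_mono) auto
  also have "\<dots> = d - card S" using assms(1) by (simp add: card_Diff_subset finite_subset)
  finally show ?thesis using assms by simp
qed

lemma stack_index_in_index_set:
  assumes F: "diag_plane_family n d k S \<beta>" and "k \<le> d" and x: "x \<in> index_set n (k + 1)"
  shows "stack_index d S \<beta> x \<in> index_set n d"
proof -
  have lx: "length x = k + 1" and x_lt: "\<forall>y\<in>set x. y < n"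
    using x unfolding index_set_def by auto
  have "stack_index d S \<beta> x ! i < n" if i: "i < d" for i
  proof (cases "i \<in> S")
    case True
    have "hd x < n" using lx x_lt by (cases x) auto
    thus ?thesis using i True F unfolding diag_plane_family_def stack_index_def by auto
  next
    case False
    have "card ({..<i} - S) < k"
      using card_free_coords_less[of S d k i] F \<open>k \<le> d\<close> i False
      unfolding diag_plane_family_def by auto
    hence "tl x ! card ({..<i} - S) \<in> set x" using lx by (cases x) auto
    thus ?thesis using i False x_lt unfolding stack_index_def by auto
  qed
  thus ?thesis unfolding index_set_def by (simp add: stack_index_def all_set_conv_all_nth)
qed

lemma stack_index_separates:
  assumes F: "diag_plane_family n d k S \<beta>" and "k \<le> d"
    and a: "a \<in> index_set n (k + 1)" and b: "b \<in> index_set n (k + 1)"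
    and ab: "\<forall>j<k + 1. a ! j \<noteq> b ! j" and i: "i < d"
  shows "stack_index d S \<beta> a ! i \<noteq> stack_index d S \<beta> b ! i"
proof (cases "i \<in> S")
  case True
  obtain a0 a' b0 b' where "a = a0 # a'" "b = b0 # b'"
    using a b unfolding index_set_def by (cases a; cases b) auto
  moreover have "a ! 0 < n" "b ! 0 < n" "a ! 0 \<noteq> b ! 0"
    using a b ab unfolding index_set_def by auto
  ultimately have "\<beta> (hd a) i \<noteq> \<beta> (hd b) i"
    using F True unfolding diag_plane_family_def by auto
  thus ?thesis using i True unfolding stack_index_def by simp
next
  case False
  have "card ({..<i} - S) < k"
    using card_free_coords_less[of S d k i] F \<open>k \<le> d\<close> i False
    unfolding diag_plane_family_def by auto
  moreover have "length a = k + 1" "length b = k + 1"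
    using a b unfolding index_set_def by auto
  ultimately have "tl a ! card ({..<i} - S) \<noteq> tl b ! card ({..<i} - S)"
    using ab by (simp add: nth_tl)
  thus ?thesis using i False unfolding stack_index_def by simp
qed

lemma inj_on_if_all_coords_differ:
  assumes "0 < d" and "\<And>a b. a \<in> X \<Longrightarrow> b \<in> X \<Longrightarrow> a \<noteq> b \<Longrightarrow> \<forall>i<d. h a ! i \<noteq> h b ! i"
  shows "inj_on h X"
  using assms by (metis inj_onI)

lemma stack_index_image_diagonal:
  assumes F: "diag_plane_family n d k S \<beta>" and "k \<le> d" and "0 < d"
    and q: "q \<in> diagonals n (k + 1)"
  shows "stack_index d S \<beta> ` q \<in> diagonals n d"
proof -
  let ?h = "stack_index d S \<beta>"
  have q_sub: "q \<subseteq> index_set n (k + 1)" and "card q = n"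
    using q unfolding diagonals_def by auto
  have sep: "\<forall>i<d. ?h a ! i \<noteq> ?h b ! i" if "a \<in> q" "b \<in> q" "a \<noteq> b" for a b
    using that q q_sub stack_index_separates[OF F \<open>k \<le> d\<close>]
    unfolding diagonals_def by blast
  have "inj_on ?h q" using inj_on_if_all_coords_differ[OF \<open>0 < d\<close> sep] .
  hence "card (?h ` q) = n" using \<open>card q = n\<close> by (simp add: card_image)
  moreover have "?h ` q \<subseteq> index_set n d"
    using q_sub stack_index_in_index_set[OF F \<open>k \<le> d\<close>] by auto
  ultimately show ?thesis unfolding diagonals_def using sep by blast
qed

lemma positive_diagonal_of_stack:
  assumes "diag_plane_family n d k S \<beta>" and "k \<le> d" and "0 < d"
    and "q \<in> diagonals n (k + 1)" and "\<forall>x\<in>q. 0 < stack_planes d A S \<beta> x"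
  shows "\<exists>p\<in>diagonals n d. \<forall>\<alpha>\<in>p. 0 < A \<alpha>"
  using stack_index_image_diagonal[OF assms(1-4)] assms(5)
  by (intro bexI[of _ "stack_index d S \<beta> ` q"]) (auto simp: stack_planes_eq)

lemma diagonal_first_coord_bij:
  assumes p: "p \<in> diagonals n d" and "0 < d"
  shows "bij_betw (\<lambda>\<alpha>. \<alpha> ! 0) p {..<n}"
proof -
  have inj: "inj_on (\<lambda>\<alpha>. \<alpha> ! 0) p"
    using p \<open>0 < d\<close> unfolding diagonals_def by (auto intro!: inj_onI)
  have "(\<lambda>\<alpha>. \<alpha> ! 0) ` p \<subseteq> {..<n}"
    using p \<open>0 < d\<close> unfolding diagonals_def index_set_def by (force intro: nth_mem)
  moreover have "card ((\<lambda>\<alpha>. \<alpha> ! 0) ` p) = card {..<n}"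
    using p inj by (simp add: card_image diagonals_def)
  ultimately show ?thesis using inj by (simp add: bij_betw_def card_subset_eq)
qed

definition diagonal_plane_values :: "nat list set \<Rightarrow> nat \<Rightarrow> nat \<Rightarrow> nat" where
  "diagonal_plane_values p t i = inv_into p (\<lambda>\<alpha>. \<alpha> ! 0) t ! i"

lemma diagonal_plane_values_first_coord:
  assumes "p \<in> diagonals n d" and "0 < d" and "a \<in> p"
  shows "diagonal_plane_values p (a ! 0) i = a ! i"
  using bij_betw_inv_into_left[OF diagonal_first_coord_bij[OF assms(1,2)] assms(3)]
  unfolding diagonal_plane_values_def by simp

lemma diag_plane_family_diagonal_plane_values:
  assumes p: "p \<in> diagonals n d" and "k < d"
  shows "diag_plane_family n d k {..<d - k} (diagonal_plane_values p)"
proof -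
  have bij: "bij_betw (\<lambda>\<alpha>. \<alpha> ! 0) p {..<n}"
    using diagonal_first_coord_bij[OF p] \<open>k < d\<close> by simp
  let ?pt = "inv_into p (\<lambda>\<alpha>. \<alpha> ! 0)"
  have pt_in: "t < n \<Longrightarrow> ?pt t \<in> p" for t
    using bij by (auto intro: inv_into_into simp: bij_betw_def)
  have pt_inj: "t < n \<Longrightarrow> u < n \<Longrightarrow> t \<noteq> u \<Longrightarrow> ?pt t \<noteq> ?pt u" for t u
    using bij by (metis bij_betw_inv_into_right lessThan_iff)
  show ?thesis
    unfolding diag_plane_family_def diagonal_plane_values_def
    using p pt_in pt_inj by (fastforce simp: diagonals_def index_set_def)
qed

lemma positive_diagonal_to_stack:
  assumes "k < d" and p: "p \<in> diagonals n d" and pos: "\<forall>\<alpha>\<in>p. 0 < A \<alpha>"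
  shows "\<exists>S \<beta>. diag_plane_family n d k S \<beta> \<and>
           (\<exists>q\<in>diagonals n (k + 1). \<forall>x\<in>q. 0 < stack_planes d A S \<beta> x)"
proof -
  let ?m = "d - k" and ?\<beta> = "diagonal_plane_values p"
  have p_sub: "p \<subseteq> index_set n d" and "card p = n"
    and p_sep: "\<And>a b. a \<in> p \<Longrightarrow> b \<in> p \<Longrightarrow> a \<noteq> b \<Longrightarrow> \<forall>i<d. a ! i \<noteq> b ! i"
    using p unfolding diagonals_def by auto
  define g where "g \<alpha> = (\<alpha> ! 0) # drop ?m \<alpha>" for \<alpha> :: "nat list"
  have stack_index_g: "stack_index d {..<?m} ?\<beta> (g a) = a" if a: "a \<in> p" for a
  proof (rule nth_equalityI)
    have la: "length a = d" using a p_sub unfolding index_set_def by auto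
    thus "length (stack_index d {..<?m} ?\<beta> (g a)) = length a" by (simp add: stack_index_def)
    fix i assume "i < length (stack_index d {..<?m} ?\<beta> (g a))"
    hence i: "i < d" by (simp add: stack_index_def)
    have "{..<i} - {..<?m} = {?m..<i}" by auto
    hence "card ({..<i} - {..<?m}) = i - ?m" by simp
    thus "stack_index d {..<?m} ?\<beta> (g a) ! i = a ! i"
      using i la diagonal_plane_values_first_coord[OF p _ a] \<open>k < d\<close>
      unfolding stack_index_def g_def by auto
  qed
  have g_sep: "\<forall>j<k + 1. g a ! j \<noteq> g b ! j" if "a \<in> p" "b \<in> p" "a \<noteq> b" for a b
  proof -
    have "length a = d" "length b = d" using that p_sub unfolding index_set_def by auto
    thus ?thesis
      using p_sep[OF that] \<open>k < d\<close> unfolding g_def by (auto simp: nth_Cons split: nat.split)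
  qed
  have g_in: "g a \<in> index_set n (k + 1)" if "a \<in> p" for a
    using that p_sub \<open>k < d\<close> set_drop_subset[of ?m a]
    unfolding index_set_def g_def by (fastforce intro: nth_mem)
  have "inj_on g p" using inj_on_if_all_coords_differ[of "k + 1", OF _ g_sep] by simp
  hence "g ` p \<in> diagonals n (k + 1)"
    unfolding diagonals_def using g_in g_sep \<open>card p = n\<close> by (auto simp: card_image)
  moreover have "\<forall>x\<in>g ` p. 0 < stack_planes d A {..<?m} ?\<beta> x"
    using pos stack_index_g by (auto simp: stack_planes_eq)
  ultimately show ?thesis using diag_plane_family_diagonal_plane_values[OF p \<open>k < d\<close>] by blast
qed

lemma stack_planes_nonneg:
  assumes "\<forall>\<alpha>\<in>index_set n d. 0 \<le> A \<alpha>" and "diag_plane_family n d k S \<beta>" and "k \<le> d"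
  shows "\<forall>x\<in>index_set n (k + 1). 0 \<le> stack_planes d A S \<beta> x"
  using assms stack_index_in_index_set by (auto simp: stack_planes_eq)

lemma positive_diagonal_iff_stack:
  assumes "k < d"
  shows "(\<exists>p\<in>diagonals n d. \<forall>\<alpha>\<in>p. 0 < A \<alpha>) \<longleftrightarrow>
    (\<exists>S \<beta>. diag_plane_family n d k S \<beta> \<and>
       (\<exists>q\<in>diagonals n (k + 1). \<forall>x\<in>q. 0 < stack_planes d A S \<beta> x))"
proof
  assume "\<exists>p\<in>diagonals n d. \<forall>\<alpha>\<in>p. 0 < A \<alpha>"
  thus "\<exists>S \<beta>. diag_plane_family n d k S \<beta> \<and>
      (\<exists>q\<in>diagonals n (k + 1). \<forall>x\<in>q. 0 < stack_planes d A S \<beta> x)"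
    using positive_diagonal_to_stack[OF assms] by blast
next
  assume "\<exists>S \<beta>. diag_plane_family n d k S \<beta> \<and>
      (\<exists>q\<in>diagonals n (k + 1). \<forall>x\<in>q. 0 < stack_planes d A S \<beta> x)"
  then obtain S \<beta> q where "diag_plane_family n d k S \<beta>" "q \<in> diagonals n (k + 1)"
    "\<forall>x\<in>q. 0 < stack_planes d A S \<beta> x" by blast
  with assms show "\<exists>p\<in>diagonals n d. \<forall>\<alpha>\<in>p. 0 < A \<alpha>"
    by (intro positive_diagonal_of_stack) auto
qed

theorem mainTheorem5:
  fixes A :: "nat list \<Rightarrow> real" and n d k :: nat
  assumes "polystochastic n d A" and "1 \<le> k" and "k \<le> d - 1"
  shows "(per n d A > 0 \<longleftrightarrow>
           (\<exists>S \<beta>. diag_plane_family n d k S \<beta> \<and>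
                  per n (k + 1) (stack_planes d A S \<beta>) > 0))
       \<and> (per n d A = 0 \<longleftrightarrow>
           (\<forall>S \<beta>. diag_plane_family n d k S \<beta> \<longrightarrow>
                  per n (k + 1) (stack_planes d A S \<beta>) = 0))"
proof -
  have nonneg: "\<forall>\<alpha>\<in>index_set n d. 0 \<le> A \<alpha>"
    using assms(1) unfolding polystochastic_def by auto
  have "k < d" using assms by auto
  note stack_nonneg = stack_planes_nonneg[OF nonneg _ less_imp_le[OF \<open>k < d\<close>]]
  have pos: "per n d A > 0 \<longleftrightarrow>
      (\<exists>S \<beta>. diag_plane_family n d k S \<beta> \<and> per n (k + 1) (stack_planes d A S \<beta>) > 0)"
  proof -
    have "per n (k + 1) (stack_planes d A S \<beta>) > 0 \<longleftrightarrow>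
        (\<exists>q\<in>diagonals n (k + 1). \<forall>x\<in>q. 0 < stack_planes d A S \<beta> x)"
      if "diag_plane_family n d k S \<beta>" for S \<beta>
      using per_pos_iff_positive_diagonal[OF stack_nonneg[OF that]] .
    thus ?thesis
      using per_pos_iff_positive_diagonal[OF nonneg] positive_diagonal_iff_stack[OF \<open>k < d\<close>]
      by blast
  qed
  moreover have "per n d A = 0 \<longleftrightarrow> \<not> per n d A > 0"
    using per_nonneg[OF nonneg] by linarith
  moreover have "per n (k + 1) (stack_planes d A S \<beta>) = 0 \<longleftrightarrow>
      \<not> per n (k + 1) (stack_planes d A S \<beta>) > 0" if "diag_plane_family n d k S \<beta>" for S \<beta>
    using per_nonneg[OF stack_nonneg[OF that]] by linarith
  ultimately show ?thesis by blast
qed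

end
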